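(* Under the same setting as follows: $S=(Z_1,\dots,Z_n)$ with $Z_i$ i.i.d. $\sim P_Z$, a learning algorithm $P_{W|S}$, a loss $\ell$ such that for every $w$ and every $\lambda\in\mathbb R$, $\mathbf E_{P_Z}[e^{\lambda(\ell(w,Z)-\mathbf E\ell(w,Z))}]\le e^{\lambda^2\sigma^2/2}$; $\beta>1$, $P_{SW}\ll P_SP_W$, $\mathcal H_\beta(S,W)<\infty$, $\delta\in(0,1)$. Then with probability at least $1-\delta$ over $S\sim P_S$, $$\mathbf E_{P_{W|S}}[\mathrm{gen}(S,W)]\le\sqrt{\frac{2\sigma^2}{n}}\left(\frac{\beta}{4(\beta-1)}+\log\frac{\big((\beta-1)\mathcal H_\beta(S,W)+1\big)^{1/\beta}}{\delta}\right).$$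
   Context: $\mathrm{gen}(S,W):=\mathbf E_{Z\sim P_Z}[\ell(W,Z)]-\frac1n\sum_{i=1}^n\ell(W,Z_i)$. $P_{SW}$ is the joint law of $(S,W)$ and $P_S,P_W$ its marginals. $\mathcal H_\beta(S,W):=\mathcal H_\beta(P_{SW}\Vert P_SP_W)$ where $\mathcal H_\beta(P\Vert Q):=\int\frac{(\mathrm dP/\mathrm dQ)^\beta-1}{\beta-1}\,\mathrm dQ$. Logarithms are natural. *)

theory Defs
  imports "HOL-Probability.Probability"
begin

definition sample_law :: "'z measure \<Rightarrow> nat \<Rightarrow> (nat \<Rightarrow> 'z) measure" where
  "sample_law PZ n = PiM {..<n} (\<lambda>_. PZ)"

definition joint_law :: "'s measure \<Rightarrow> 'w measure \<Rightarrow> ('s \<Rightarrow> 'w measure) \<Rightarrow> ('s \<times> 'w) measure" where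
  "joint_law PS MW K = PS \<bind> (\<lambda>s. K s \<bind> (\<lambda>w. return (PS \<Otimes>\<^sub>M MW) (s, w)))"

text \<open>Hellinger-type divergence H_beta(P || Q) = int ((dP/dQ)^beta - 1)/(beta - 1) dQ,
  for Q a probability measure, written as (int (dP/dQ)^beta dQ - 1)/(beta-1).\<close>
definition hellinger_integral :: "real \<Rightarrow> 'a measure \<Rightarrow> 'a measure \<Rightarrow> ennreal" where
  "hellinger_integral \<beta> P Q = (\<integral>\<^sup>+ x. ennreal (enn2real (RN_deriv Q P x) powr \<beta>) \<partial>Q)"

definition hellinger_div :: "real \<Rightarrow> 'a measure \<Rightarrow> 'a measure \<Rightarrow> real" where
  "hellinger_div \<beta> P Q = (enn2real (hellinger_integral \<beta> P Q) - 1) / (\<beta> - 1)"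

definition gen :: "'z measure \<Rightarrow> nat \<Rightarrow> ('w \<Rightarrow> 'z \<Rightarrow> real) \<Rightarrow> (nat \<Rightarrow> 'z) \<Rightarrow> 'w \<Rightarrow> real" where
  "gen PZ n loss s w = (\<integral>z. loss w z \<partial>PZ) - (1 / real n) * (\<Sum>i<n. loss w (s i))"

end

(* Fix t > 0 and let Q = P_S x P_W.  Hoelder's inequality with exponents beta and beta/(beta - 1),
   applied to the density dP_SW/dQ and to exp (t gen), bounds the exponential moment of t gen
   under P_SW by ((beta - 1) H_beta + 1)^(1/beta) times the (beta/(beta - 1))-th root of an
   exponential moment under Q.  Under Q the sample is independent of W, so for each fixed w the
   sub-Gaussian bound for the n i.i.d. losses applies, giving exp (beta/(beta - 1) t^2 sigma^2/(2n)).
   Markov's inequality in S and Jensen's inequality in W turn this into a bound on t E[gen | S]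
   with probability 1 - delta; t = sqrt (n/(2 sigma^2)) yields the theorem, and for sigma = 0 one
   lets t tend to infinity along a limsup of the good events. *)

theory Submission
  imports Defs
begin

lemma nn_integral_mult_le_Holder:
  fixes f g :: "'a \<Rightarrow> real" and p q A B :: real
  assumes p: "p > 1" and q: "q > 1" and pq: "1 / p + 1 / q = 1"
    and [measurable]: "f \<in> borel_measurable M" "g \<in> borel_measurable M"
    and f_nonneg: "\<And>x. 0 \<le> f x" and g_nonneg: "\<And>x. 0 \<le> g x"
    and A: "(\<integral>\<^sup>+x. f x powr p \<partial>M) \<le> ennreal A" "A > 0"
    and B: "(\<integral>\<^sup>+x. g x powr q \<partial>M) \<le> ennreal B" "B > 0"
  shows "(\<integral>\<^sup>+x. f x * g x \<partial>M) \<le> ennreal (A powr (1 / p) * B powr (1 / q))"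
proof -
  define u where "u = A powr (1 / p)"
  define v where "v = B powr (1 / q)"
  define a where "a = u * v / (p * A)"
  define b where "b = u * v / (q * B)"
  have uv: "u > 0" "v > 0" "u powr p = A" "v powr q = B"
    using p q A B by (auto simp: u_def v_def powr_powr)
  have ab: "a \<ge> 0" "b \<ge> 0" using p q A B uv by (auto simp: a_def b_def)
  have pointwise: "f x * g x \<le> a * f x powr p + b * g x powr q" for x
  proof -
    have "(f x / u) * (g x / v) \<le> (f x / u) powr p / p + (g x / v) powr q / q"
      using f_nonneg g_nonneg uv by (intro Youngs_inequality[OF p q pq]) auto
    then have "u * v * ((f x / u) * (g x / v)) \<le> u * v * ((f x / u) powr p / p + (g x / v) powr q / q)"
      using uv by (intro mult_left_mono) auto
    then show ?thesis
      using uv by (simp add: powr_divide f_nonneg g_nonneg a_def b_def field_simps)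
  qed
  have "(\<integral>\<^sup>+x. f x * g x \<partial>M) \<le> (\<integral>\<^sup>+x. ennreal a * (f x powr p) + ennreal b * (g x powr q) \<partial>M)"
    using pointwise ab
    by (intro nn_integral_mono) (simp add: ennreal_mult'[symmetric] flip: ennreal_plus)
  also have "\<dots> = ennreal a * (\<integral>\<^sup>+x. f x powr p \<partial>M) + ennreal b * (\<integral>\<^sup>+x. g x powr q \<partial>M)"
    by (simp add: nn_integral_add nn_integral_cmult)
  also have "\<dots> \<le> ennreal a * ennreal A + ennreal b * ennreal B"
    using A B by (intro add_mono mult_left_mono) auto
  also have "\<dots> = ennreal (u * v * (1 / p + 1 / q))"
    using ab A B p q by (simp add: a_def b_def field_simps ennreal_mult'[symmetric] flip: ennreal_plus)
  finally show ?thesis by (simp add: pq u_def v_def)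
qed

lemma nn_integral_real_RN_deriv:
  fixes h :: "'a \<Rightarrow> real"
  assumes Q: "sigma_finite_measure Q" and P: "sigma_finite_measure P"
    and ac: "absolutely_continuous Q P" and sets_eq: "sets P = sets Q"
    and h: "h \<in> borel_measurable Q" "\<And>x. 0 \<le> h x"
  shows "(\<integral>\<^sup>+x. h x \<partial>P) = (\<integral>\<^sup>+x. enn2real (RN_deriv Q P x) * h x \<partial>Q)"
proof -
  interpret Q: sigma_finite_measure Q by fact
  have "(\<integral>\<^sup>+x. h x \<partial>P) = (\<integral>\<^sup>+x. RN_deriv Q P x * h x \<partial>Q)"
    using h by (intro Q.RN_deriv_nn_integral[OF ac sets_eq]) auto
  also have "\<dots> = (\<integral>\<^sup>+x. enn2real (RN_deriv Q P x) * h x \<partial>Q)"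
    using Q.RN_deriv_finite[OF P ac sets_eq]
    by (intro nn_integral_cong_AE) (auto simp: ennreal_mult h(2) less_top)
  finally show ?thesis .
qed

lemma one_le_hellinger_integral:
  assumes P: "prob_space P" and Q: "prob_space Q"
    and ac: "absolutely_continuous Q P" and sets_eq: "sets P = sets Q" and \<beta>: "\<beta> > 1"
  shows "1 \<le> hellinger_integral \<beta> P Q"
proof -
  interpret Q: prob_space Q by fact
  define g where "g x = enn2real (RN_deriv Q P x)" for x
  define H where "H = hellinger_integral \<beta> P Q"
  have [measurable]: "g \<in> borel_measurable Q"
    unfolding g_def by (intro borel_measurable_enn2real borel_measurable_RN_deriv)
  have conjugate: "\<beta> / (\<beta> - 1) > 1" "1 / \<beta> + 1 / (\<beta> / (\<beta> - 1)) = 1"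
    using \<beta> by (auto simp: field_simps)
  have young: "g x \<le> g x powr \<beta> / \<beta> + (\<beta> - 1) / \<beta>" for x
    using Youngs_inequality[OF \<beta> conjugate, of "g x" 1] by (simp add: g_def)
  have "ennreal 1 = (\<integral>\<^sup>+x. g x \<partial>Q)"
    using nn_integral_real_RN_deriv[of Q P "\<lambda>_. 1"] P Q ac sets_eq
    by (simp add: g_def prob_space_imp_sigma_finite prob_space.emeasure_space_1)
  also have "\<dots> \<le> (\<integral>\<^sup>+x. ennreal (1 / \<beta>) * (g x powr \<beta>) + ennreal ((\<beta> - 1) / \<beta>) \<partial>Q)"
    using young \<beta>
    by (intro nn_integral_mono) (simp add: ennreal_mult'[symmetric] flip: ennreal_plus)
  also have "\<dots> = ennreal (1 / \<beta>) * H + ennreal ((\<beta> - 1) / \<beta>)"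
    by (simp add: nn_integral_add nn_integral_cmult Q.emeasure_space_1 H_def
        hellinger_integral_def g_def)
  finally have bound: "ennreal 1 \<le> ennreal (1 / \<beta>) * H + ennreal ((\<beta> - 1) / \<beta>)" .
  show ?thesis
  proof (cases H)
    case (real h)
    with bound \<beta> have "1 \<le> h / \<beta> + (\<beta> - 1) / \<beta>"
      by (simp add: ennreal_mult'[symmetric] flip: ennreal_plus)
    with \<beta> real show ?thesis by (simp add: H_def field_simps)
  qed (simp add: H_def)
qed

lemma (in prob_space) event_nn_integral_Markov:
  assumes [measurable]: "G \<in> borel_measurable M"
    and G: "(\<integral>\<^sup>+x. G x \<partial>M) \<le> ennreal C" and C: "C > 0" and \<delta>: "\<delta> > 0"
  shows "\<exists>A\<in>events. prob A \<ge> 1 - \<delta> \<and> (\<forall>x\<in>A. G x \<le> ennreal (C / \<delta>))"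
proof -
  define A where "A = {x \<in> space M. G x \<le> ennreal (C / \<delta>)}"
  have A_event: "A \<in> events" unfolding A_def by measurable
  have "emeasure M (space M - A) \<le> emeasure M {x \<in> space M. 1 \<le> ennreal (\<delta> / C) * G x}"
  proof (rule emeasure_mono)
    show "space M - A \<subseteq> {x \<in> space M. 1 \<le> ennreal (\<delta> / C) * G x}"
    proof
      fix x assume x: "x \<in> space M - A"
      then have "ennreal (\<delta> / C) * ennreal (C / \<delta>) \<le> ennreal (\<delta> / C) * G x"
        by (intro mult_left_mono) (auto simp: A_def)
      with x C \<delta> show "x \<in> {x \<in> space M. 1 \<le> ennreal (\<delta> / C) * G x}"
        by (simp add: ennreal_mult'[symmetric])
    qed
  qed measurable
  also have "\<dots> \<le> ennreal (\<delta> / C) * (\<integral>\<^sup>+x. G x * indicator (space M) x \<partial>M)"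
    by (rule nn_integral_Markov_inequality) auto
  also have "(\<integral>\<^sup>+x. G x * indicator (space M) x \<partial>M) = (\<integral>\<^sup>+x. G x \<partial>M)"
    by (intro nn_integral_cong) simp
  also have "ennreal (\<delta> / C) * \<dots> \<le> ennreal (\<delta> / C) * ennreal C"
    using G by (intro mult_left_mono) auto
  also have "\<dots> = ennreal \<delta>"
    using C \<delta> by (simp add: ennreal_mult'[symmetric])
  finally have "prob (space M - A) \<le> \<delta>"
    using \<delta> by (simp add: emeasure_eq_measure)
  then show ?thesis
    using prob_compl[OF A_event] by (intro bexI[OF _ A_event]) (auto simp: A_def)
qed

(* The hypothesis 1 \<le> c is needed only when f is not integrable and its integral is the junk value 0. *)
lemma (in prob_space) integral_le_ln_of_nn_integral_exp_le:
  fixes f :: "'a \<Rightarrow> real"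
  assumes [measurable]: "f \<in> borel_measurable M"
    and exp_le: "(\<integral>\<^sup>+x. exp (f x) \<partial>M) \<le> ennreal c" and c: "1 \<le> c"
  shows "(\<integral>x. f x \<partial>M) \<le> ln c"
proof (cases "integrable M f")
  case True
  have exp_integrable: "integrable M (\<lambda>x. exp (f x))"
    using exp_le by (intro integrableI_nonneg) (auto simp: top.not_eq_extremum intro: le_less_trans)
  have "exp (\<integral>x. f x \<partial>M) \<le> (\<integral>x. exp (f x) \<partial>M)"
    using True exp_integrable exp_convex by (intro jensens_inequality[where I=UNIV]) auto
  also have "\<dots> = enn2real (\<integral>\<^sup>+x. exp (f x) \<partial>M)"
    by (intro integral_eq_nn_integral) auto
  also have "\<dots> \<le> c"
    using enn2real_mono[OF exp_le] c by simp
  finally show ?thesis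
    using c by (simp add: ln_ge_iff)
next
  case False
  then show ?thesis using c by (simp add: not_integrable_integral_eq)
qed

lemma (in prob_space) event_kernel_integral_le_ln:
  fixes K :: "'a \<Rightarrow> 'b measure" and f :: "'a \<Rightarrow> 'b \<Rightarrow> real"
  assumes K[measurable]: "K \<in> M \<rightarrow>\<^sub>M prob_algebra N"
    and [measurable]: "(\<lambda>(x, y). f x y) \<in> borel_measurable (M \<Otimes>\<^sub>M N)"
    and moment: "(\<integral>\<^sup>+x. \<integral>\<^sup>+y. exp (f x y) \<partial>K x \<partial>M) \<le> ennreal C"
    and \<delta>: "0 < \<delta>" "\<delta> \<le> C"
  shows "\<exists>A\<in>events. prob A \<ge> 1 - \<delta> \<and> (\<forall>x\<in>A. (\<integral>y. f x y \<partial>K x) \<le> ln (C / \<delta>))"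
proof -
  define G where "G x = (\<integral>\<^sup>+y. exp (f x y) \<partial>K x)" for x
  have [measurable]: "G \<in> borel_measurable M"
    unfolding G_def by (intro nn_integral_measurable_subprob_algebra2[OF _ measurable_prob_algebraD[OF K]])
      measurable
  obtain A where A: "A \<in> events" "prob A \<ge> 1 - \<delta>" and G_A: "\<And>x. x \<in> A \<Longrightarrow> G x \<le> ennreal (C / \<delta>)"
    using event_nn_integral_Markov[of G C \<delta>] moment \<delta> by (auto simp: G_def)
  have "(\<integral>y. f x y \<partial>K x) \<le> ln (C / \<delta>)" if x: "x \<in> A" for x
  proof -
    have "x \<in> space M" using A(1) x sets.sets_into_space by blast
    then have Kx: "prob_space (K x)" "sets (K x) = sets N"
      using measurable_space[OF K] by (auto simp: space_prob_algebra)
    have "f x \<in> borel_measurable (K x)"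
      using measurable_Pair2[OF _ \<open>x \<in> space M\<close>, of "\<lambda>(x, y). f x y"]
      by (simp add: measurable_cong_sets[OF Kx(2) refl])
    then show ?thesis
      using G_A[OF x] \<delta>
      by (intro prob_space.integral_le_ln_of_nn_integral_exp_le[OF Kx(1)]) (auto simp: G_def)
  qed
  with A show ?thesis by auto
qed

lemma (in prob_space) event_nonpos_of_scaled_bounds:
  fixes f :: "'a \<Rightarrow> real"
  assumes "\<And>k::nat. \<exists>A\<in>events. prob A \<ge> p \<and> (\<forall>x\<in>A. real (Suc k) * f x \<le> L)"
  shows "\<exists>A\<in>events. prob A \<ge> p \<and> (\<forall>x\<in>A. f x \<le> 0)"
proof -
  obtain A where A: "\<And>k. A k \<in> events" "\<And>k. prob (A k) \<ge> p"
      "\<And>k x. x \<in> A k \<Longrightarrow> real (Suc k) * f x \<le> L"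
    using assms by metis
  define B where "B j = (\<Union>k\<in>{j..}. A k)" for j
  have B_events: "range B \<subseteq> events" using A(1) by (auto simp: B_def)
  have lim: "(\<lambda>j. prob (B j)) \<longlonglongrightarrow> prob (limsup A)"
    unfolding limsup_INF_SUP B_def[symmetric]
    using B_events by (intro finite_Lim_measure_decseq) (auto simp: B_def decseq_def intro: order_trans)
  have "prob (B j) \<ge> p" for j
  proof -
    have "prob (A j) \<le> prob (B j)"
      using B_events by (intro finite_measure_mono) (auto simp: B_def)
    then show ?thesis using A(2)[of j] by linarith
  qed
  then have "prob (limsup A) \<ge> p"
    by (intro LIMSEQ_le_const[OF lim]) auto
  moreover have "f x \<le> 0" if x: "x \<in> limsup A" for x
  proof (rule ccontr)
    assume "\<not> f x \<le> 0"
    then have fx: "f x > 0" by simp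
    obtain N :: nat where N: "L / f x < real N" using reals_Archimedean2 by blast
    obtain k where k: "k \<ge> N" "x \<in> A k"
      using x by (auto simp: mem_limsup_iff frequently_sequentially)
    have "L < real N * f x" using N fx by (simp add: field_simps)
    also have "\<dots> \<le> real (Suc k) * f x" using k(1) fx by (intro mult_right_mono) auto
    finally show False using A(3)[OF k(2)] by simp
  qed
  ultimately show ?thesis
    using A(1) by (intro bexI[of _ "limsup A"]) auto
qed

lemma (in prob_space) event_bound_of_quadratic_scaled_bounds:
  fixes f :: "'a \<Rightarrow> real"
  assumes bound: "\<And>t. t > 0 \<Longrightarrow> \<exists>A\<in>events. prob A \<ge> p \<and> (\<forall>x\<in>A. t * f x \<le> L + b * t\<^sup>2 * (a\<^sup>2 / 4))"
    and a: "a \<ge> 0"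
  shows "\<exists>A\<in>events. prob A \<ge> p \<and> (\<forall>x\<in>A. f x \<le> a * (b / 4 + L))"
proof (cases "a = 0")
  case True
  then have "\<exists>A\<in>events. prob A \<ge> p \<and> (\<forall>x\<in>A. f x \<le> 0)"
    using bound by (intro event_nonpos_of_scaled_bounds[where L = L]) simp
  with True show ?thesis by simp
next
  case False
  with a have a: "a > 0" by simp
  then obtain A where A: "A \<in> events" "prob A \<ge> p"
      and f_A: "\<And>x. x \<in> A \<Longrightarrow> (1 / a) * f x \<le> L + b * (1 / a)\<^sup>2 * (a\<^sup>2 / 4)"
    using bound[of "1 / a"] by auto
  have "f x \<le> a * (b / 4 + L)" if "x \<in> A" for x
    using f_A[OF that] a by (simp add: power2_eq_square field_simps)
  with A show ?thesis by auto
qed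

context
  fixes PS :: "'s measure" and MW :: "'w measure" and K :: "'s \<Rightarrow> 'w measure"
  assumes PS: "prob_space PS" and K[measurable]: "K \<in> PS \<rightarrow>\<^sub>M prob_algebra MW"
begin

lemma joint_law_kernel_measurable:
  "(\<lambda>s. K s \<bind> (\<lambda>w. return (PS \<Otimes>\<^sub>M MW) (s, w))) \<in> PS \<rightarrow>\<^sub>M prob_algebra (PS \<Otimes>\<^sub>M MW)"
  by measurable

lemma prob_space_joint_law: "prob_space (joint_law PS MW K)"
  unfolding joint_law_def
  using PS by (intro prob_space_bind'[OF _ joint_law_kernel_measurable]) (simp add: space_prob_algebra)

lemma sets_joint_law: "sets (joint_law PS MW K) = sets (PS \<Otimes>\<^sub>M MW)"
  unfolding joint_law_def
  by (rule sets_bind[OF sets_kernel[OF measurable_prob_algebraD[OF joint_law_kernel_measurable]]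
        prob_space.not_empty[OF PS]])

lemma nn_integral_joint_law:
  assumes [measurable]: "(\<lambda>(s, w). h s w) \<in> borel_measurable (PS \<Otimes>\<^sub>M MW)"
  shows "(\<integral>\<^sup>+(s, w). h s w \<partial>joint_law PS MW K) = (\<integral>\<^sup>+s. \<integral>\<^sup>+w. h s w \<partial>K s \<partial>PS)"
proof -
  have "(\<integral>\<^sup>+(s, w). h s w \<partial>joint_law PS MW K)
      = (\<integral>\<^sup>+s. \<integral>\<^sup>+(s', w). h s' w \<partial>(K s \<bind> (\<lambda>w. return (PS \<Otimes>\<^sub>M MW) (s, w))) \<partial>PS)"
    unfolding joint_law_def
    by (rule nn_integral_bind[OF _ measurable_prob_algebraD[OF joint_law_kernel_measurable]]) measurable
  also have "\<dots> = (\<integral>\<^sup>+s. \<integral>\<^sup>+w. h s w \<partial>K s \<partial>PS)"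
  proof (rule nn_integral_cong)
    fix s assume s: "s \<in> space PS"
    then have Ks: "sets (K s) = sets MW" "prob_space (K s)"
      using measurable_space[OF K] by (auto simp: space_prob_algebra)
    have Pair_s: "Pair s \<in> K s \<rightarrow>\<^sub>M PS \<Otimes>\<^sub>M MW"
      using s by (simp add: measurable_cong_sets[OF Ks(1) refl])
    have "K s \<bind> (\<lambda>w. return (PS \<Otimes>\<^sub>M MW) (s, w)) = distr (K s) (PS \<Otimes>\<^sub>M MW) (Pair s)"
      using Ks(2) Pair_s by (intro bind_return_distr') (auto simp: prob_space.not_empty)
    moreover have "(\<integral>\<^sup>+(s', w). h s' w \<partial>distr (K s) (PS \<Otimes>\<^sub>M MW) (Pair s)) = (\<integral>\<^sup>+w. h s w \<partial>K s)"
      by (subst nn_integral_distr[OF Pair_s]) auto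
    ultimately show "(\<integral>\<^sup>+(s', w). h s' w \<partial>(K s \<bind> (\<lambda>w. return (PS \<Otimes>\<^sub>M MW) (s, w))))
        = (\<integral>\<^sup>+w. h s w \<partial>K s)"
      by simp
  qed
  finally show ?thesis .
qed

end

locale subgaussian_loss =
  fixes PZ :: "'z measure" and MW :: "'w measure" and n :: nat
    and loss :: "'w \<Rightarrow> 'z \<Rightarrow> real" and \<sigma> :: real
  assumes prob_space_PZ: "prob_space PZ"
    and n_pos: "n \<ge> 1"
    and loss_measurable[measurable]: "(\<lambda>(w, z). loss w z) \<in> borel_measurable (MW \<Otimes>\<^sub>M PZ)"
    and subgaussian: "\<And>w t. w \<in> space MW \<Longrightarrow>
        (\<integral>\<^sup>+ z. ennreal (exp (t * (loss w z - (\<integral>z'. loss w z' \<partial>PZ)))) \<partial>PZ)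
          \<le> ennreal (exp (t\<^sup>2 * \<sigma>\<^sup>2 / 2))"
begin

sublocale PZ: prob_space PZ by (rule prob_space_PZ)

lemma prob_space_sample_law: "prob_space (sample_law PZ n)"
  unfolding sample_law_def by (intro prob_space_PiM prob_space_PZ)

lemma measurable_gen[measurable]:
  "(\<lambda>(s, w). gen PZ n loss s w) \<in> borel_measurable (sample_law PZ n \<Otimes>\<^sub>M MW)"
proof -
  have [measurable]: "(\<lambda>x. loss (snd x) (fst x i)) \<in> borel_measurable (PiM {..<n} (\<lambda>_. PZ) \<Otimes>\<^sub>M MW)"
    if "i \<in> {..<n}" for i
    by measurable (use that in simp)
  show ?thesis unfolding gen_def sample_law_def by measurable
qed

lemma nn_integral_exp_gen_sample_law_le:
  assumes w: "w \<in> space MW"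
  shows "(\<integral>\<^sup>+s. exp (\<mu> * gen PZ n loss s w) \<partial>sample_law PZ n) \<le> exp (\<mu>\<^sup>2 * \<sigma>\<^sup>2 / (2 * n))"
proof -
  interpret product_prob_space "\<lambda>_. PZ" "{..<n}" by unfold_locales
  define c where "c = (\<integral>z. loss w z \<partial>PZ)"
  define t where "t = - \<mu> / n"
  have [measurable]: "loss w \<in> borel_measurable PZ"
    using measurable_Pair2[OF loss_measurable w] by simp
  have n: "real n > 0" using n_pos by simp
  have "\<mu> * gen PZ n loss s w = (\<Sum>i<n. t * (loss w (s i) - c))" for s
  proof -
    have "(\<Sum>i<n. t * (loss w (s i) - c)) = t * (\<Sum>i<n. loss w (s i)) - n * t * c"
      by (simp add: right_diff_distrib sum_subtractf sum_distrib_left)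
    then show ?thesis
      using n by (simp add: gen_def c_def[symmetric] t_def field_simps)
  qed
  then have "(\<integral>\<^sup>+s. exp (\<mu> * gen PZ n loss s w) \<partial>sample_law PZ n)
      = (\<integral>\<^sup>+s. (\<Prod>i\<in>{..<n}. ennreal (exp (t * (loss w (s i) - c)))) \<partial>PiM {..<n} (\<lambda>_. PZ))"
    by (simp add: sample_law_def exp_sum prod_ennreal)
  also have "\<dots> = (\<Prod>i\<in>{..<n}. \<integral>\<^sup>+ z. exp (t * (loss w z - c)) \<partial>PZ)"
    by (rule product_nn_integral_prod) auto
  also have "\<dots> \<le> (\<Prod>i\<in>{..<n}. ennreal (exp (t\<^sup>2 * \<sigma>\<^sup>2 / 2)))"
    unfolding prod_constant using subgaussian[OF w, of t] by (intro power_mono) (auto simp: c_def)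
  also have "\<dots> = exp (t\<^sup>2 * \<sigma>\<^sup>2 / 2) ^ n"
    by (simp add: ennreal_power)
  also have "exp (t\<^sup>2 * \<sigma>\<^sup>2 / 2) ^ n = exp (\<mu>\<^sup>2 * \<sigma>\<^sup>2 / (2 * n))"
    using n by (simp add: exp_of_nat_mult[symmetric] t_def power2_eq_square field_simps)
  finally show ?thesis .
qed

lemma nn_integral_exp_gen_product_le:
  assumes PW: "prob_space PW" and sets_PW: "sets PW = sets MW"
  shows "(\<integral>\<^sup>+(s, w). exp (\<mu> * gen PZ n loss s w) \<partial>(sample_law PZ n \<Otimes>\<^sub>M PW))
    \<le> exp (\<mu>\<^sup>2 * \<sigma>\<^sup>2 / (2 * n))"
proof -
  interpret PW: prob_space PW by fact
  interpret pair_sigma_finite "sample_law PZ n" PW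
    using prob_space_sample_law PW
    by (intro pair_sigma_finite.intro prob_space_imp_sigma_finite)
  have [measurable]: "(\<lambda>(s, w). gen PZ n loss s w) \<in> borel_measurable (sample_law PZ n \<Otimes>\<^sub>M PW)"
    using measurable_gen by (simp add: measurable_cong_sets[OF sets_pair_measure_cong[OF refl sets_PW] refl])
  have "(\<integral>\<^sup>+(s, w). exp (\<mu> * gen PZ n loss s w) \<partial>(sample_law PZ n \<Otimes>\<^sub>M PW))
      = (\<integral>\<^sup>+w. \<integral>\<^sup>+s. exp (\<mu> * gen PZ n loss s w) \<partial>sample_law PZ n \<partial>PW)"
    by (subst nn_integral_snd[symmetric]) auto
  also have "\<dots> \<le> (\<integral>\<^sup>+w. exp (\<mu>\<^sup>2 * \<sigma>\<^sup>2 / (2 * n)) \<partial>PW)"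
    using nn_integral_exp_gen_sample_law_le sets_eq_imp_space_eq[OF sets_PW]
    by (intro nn_integral_mono) auto
  also have "\<dots> = exp (\<mu>\<^sup>2 * \<sigma>\<^sup>2 / (2 * n))"
    by (simp add: PW.emeasure_space_1)
  finally show ?thesis .
qed

lemma nn_integral_exp_gen_le_hellinger:
  fixes P :: "((nat \<Rightarrow> 'z) \<times> 'w) measure"
  assumes P: "prob_space P" and sets_P: "sets P = sets (sample_law PZ n \<Otimes>\<^sub>M MW)"
    and PW: "prob_space PW" and sets_PW: "sets PW = sets MW"
    and \<beta>: "\<beta> > 1"
    and ac: "absolutely_continuous (sample_law PZ n \<Otimes>\<^sub>M PW) P"
    and finite: "hellinger_integral \<beta> P (sample_law PZ n \<Otimes>\<^sub>M PW) < \<infinity>"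
  shows "(\<integral>\<^sup>+(s, w). ennreal (exp (t * gen PZ n loss s w)) \<partial>P)
    \<le> enn2real (hellinger_integral \<beta> P (sample_law PZ n \<Otimes>\<^sub>M PW)) powr (1 / \<beta>)
       * exp (\<beta> / (\<beta> - 1) * t\<^sup>2 * \<sigma>\<^sup>2 / (2 * n))"
proof -
  define Q where "Q = sample_law PZ n \<Otimes>\<^sub>M PW"
  define g where "g x = enn2real (RN_deriv Q P x)" for x
  define h where "h = enn2real (hellinger_integral \<beta> P Q)"
  define \<beta>' where "\<beta>' = \<beta> / (\<beta> - 1)"
  have Q: "prob_space Q"
    unfolding Q_def by (intro prob_space_pair prob_space_sample_law PW)
  have sets_Q: "sets Q = sets (sample_law PZ n \<Otimes>\<^sub>M MW)"
    unfolding Q_def by (rule sets_pair_measure_cong[OF refl sets_PW])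
  have sets_PQ: "sets P = sets Q"
    unfolding sets_P sets_Q ..
  have g_measurable[measurable]: "g \<in> borel_measurable Q"
    unfolding g_def by (intro borel_measurable_enn2real borel_measurable_RN_deriv)
  have [measurable]: "(\<lambda>(s, w). gen PZ n loss s w) \<in> borel_measurable Q"
    unfolding measurable_cong_sets[OF sets_Q refl] by (rule measurable_gen)
  have H1: "1 \<le> hellinger_integral \<beta> P Q"
    by (rule one_le_hellinger_integral[OF P Q ac[folded Q_def] sets_PQ \<beta>])
  have H: "hellinger_integral \<beta> P Q = ennreal h" "h > 0"
    using enn2real_mono[OF H1] finite by (auto simp: h_def Q_def)
  have \<beta>': "\<beta>' > 1" "1 / \<beta> + 1 / \<beta>' = 1"
    using \<beta> by (auto simp: \<beta>'_def field_simps)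
  have exp_measurable: "(\<lambda>x. exp (t * (case x of (s, w) \<Rightarrow> gen PZ n loss s w))) \<in> borel_measurable Q"
    by measurable
  have moment_g: "(\<integral>\<^sup>+x. g x powr \<beta> \<partial>Q) \<le> ennreal h"
    using H by (simp add: hellinger_integral_def g_def)
  have "(\<integral>\<^sup>+x. exp (t * (case x of (s, w) \<Rightarrow> gen PZ n loss s w)) powr \<beta>' \<partial>Q)
      = (\<integral>\<^sup>+(s, w). exp (\<beta>' * t * gen PZ n loss s w) \<partial>Q)"
    by (intro nn_integral_cong) (simp add: exp_powr_real split_beta' ac_simps)
  also have "\<dots> \<le> ennreal (exp ((\<beta>' * t)\<^sup>2 * \<sigma>\<^sup>2 / (2 * n)))"
    unfolding Q_def by (rule nn_integral_exp_gen_product_le[OF PW sets_PW])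
  finally have moment_exp: "(\<integral>\<^sup>+x. exp (t * (case x of (s, w) \<Rightarrow> gen PZ n loss s w)) powr \<beta>' \<partial>Q)
      \<le> ennreal (exp ((\<beta>' * t)\<^sup>2 * \<sigma>\<^sup>2 / (2 * n)))" .
  have "(\<integral>\<^sup>+(s, w). ennreal (exp (t * gen PZ n loss s w)) \<partial>P)
      = (\<integral>\<^sup>+x. exp (t * (case x of (s, w) \<Rightarrow> gen PZ n loss s w)) \<partial>P)"
    by (simp add: split_beta')
  also have "\<dots> = (\<integral>\<^sup>+x. g x * exp (t * (case x of (s, w) \<Rightarrow> gen PZ n loss s w)) \<partial>Q)"
    unfolding g_def
    by (rule nn_integral_real_RN_deriv[OF prob_space_imp_sigma_finite[OF Q]
          prob_space_imp_sigma_finite[OF P] ac[folded Q_def] sets_PQ exp_measurable exp_ge_zero])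
  also have "\<dots> \<le> h powr (1 / \<beta>) * exp ((\<beta>' * t)\<^sup>2 * \<sigma>\<^sup>2 / (2 * n)) powr (1 / \<beta>')"
    by (rule nn_integral_mult_le_Holder[OF \<beta> \<beta>' g_measurable exp_measurable _ exp_ge_zero
          moment_g H(2) moment_exp exp_gt_zero]) (simp add: g_def)
  also have "exp ((\<beta>' * t)\<^sup>2 * \<sigma>\<^sup>2 / (2 * n)) powr (1 / \<beta>') = exp (\<beta>' * t\<^sup>2 * \<sigma>\<^sup>2 / (2 * n))"
    using \<beta>' by (simp add: exp_powr_real power_mult_distrib power2_eq_square)
  finally show ?thesis by (simp only: h_def Q_def \<beta>'_def)
qed

lemma expected_gen_bound_fixed_scale:
  fixes K :: "(nat \<Rightarrow> 'z) \<Rightarrow> 'w measure" and PW :: "'w measure"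
  defines "PS \<equiv> sample_law PZ n"
  defines "PSW \<equiv> joint_law PS MW K"
  assumes K: "K \<in> PS \<rightarrow>\<^sub>M prob_algebra MW"
    and PW: "prob_space PW" and sets_PW: "sets PW = sets MW"
    and \<beta>: "\<beta> > 1"
    and ac: "absolutely_continuous (PS \<Otimes>\<^sub>M PW) PSW"
    and finite: "hellinger_integral \<beta> PSW (PS \<Otimes>\<^sub>M PW) < \<infinity>"
    and \<delta>: "0 < \<delta>" "\<delta> \<le> 1"
  shows "\<exists>A\<in>sets PS. measure PS A \<ge> 1 - \<delta> \<and>
    (\<forall>s\<in>A. t * (\<integral>w. gen PZ n loss s w \<partial>K s)
      \<le> ln (enn2real (hellinger_integral \<beta> PSW (PS \<Otimes>\<^sub>M PW)) powr (1 / \<beta>) / \<delta>)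
         + \<beta> / (\<beta> - 1) * t\<^sup>2 * (\<sigma>\<^sup>2 / (2 * n)))"
proof -
  interpret PS: prob_space PS unfolding PS_def by (rule prob_space_sample_law)
  have PSW: "prob_space PSW" "sets PSW = sets (PS \<Otimes>\<^sub>M MW)"
    unfolding PSW_def
    by (rule prob_space_joint_law[OF PS.prob_space_axioms K] sets_joint_law[OF PS.prob_space_axioms K])+
  define h where "h = enn2real (hellinger_integral \<beta> PSW (PS \<Otimes>\<^sub>M PW))"
  define E where "E = exp (\<beta> / (\<beta> - 1) * t\<^sup>2 * \<sigma>\<^sup>2 / (2 * n))"
  have "1 \<le> hellinger_integral \<beta> PSW (PS \<Otimes>\<^sub>M PW)"
    using PSW PS.prob_space_axioms PW ac \<beta>
    by (intro one_le_hellinger_integral prob_space_pair)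
      (simp_all add: sets_pair_measure_cong[OF refl sets_PW])
  then have h: "1 \<le> h powr (1 / \<beta>)"
    using enn2real_mono[of 1] finite \<beta> by (intro ge_one_powr_ge_zero) (auto simp: h_def)
  have E: "1 \<le> E"
    unfolding E_def one_le_exp_iff using \<beta> by (intro divide_nonneg_nonneg mult_nonneg_nonneg) auto
  have hE: "\<delta> \<le> h powr (1 / \<beta>) * E"
    using mult_mono[OF h E] \<delta> by simp
  have [measurable]: "(\<lambda>(s, w). gen PZ n loss s w) \<in> borel_measurable (PS \<Otimes>\<^sub>M MW)"
    unfolding PS_def by (rule measurable_gen)
  have "(\<integral>\<^sup>+s. \<integral>\<^sup>+w. exp (t * gen PZ n loss s w) \<partial>K s \<partial>PS)
      = (\<integral>\<^sup>+(s, w). ennreal (exp (t * gen PZ n loss s w)) \<partial>PSW)"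
    unfolding PSW_def by (intro nn_integral_joint_law[symmetric, OF PS.prob_space_axioms K]) measurable
  also have "\<dots> \<le> h powr (1 / \<beta>) * E"
    unfolding h_def E_def PS_def
    using PSW PW sets_PW \<beta> ac finite
    by (intro nn_integral_exp_gen_le_hellinger) (simp_all add: PS_def)
  finally have moment: "(\<integral>\<^sup>+s. \<integral>\<^sup>+w. exp (t * gen PZ n loss s w) \<partial>K s \<partial>PS) \<le> h powr (1 / \<beta>) * E" .
  have "ln (h powr (1 / \<beta>) * E / \<delta>) = ln (h powr (1 / \<beta>) / \<delta> * E)"
    by simp
  also have "\<dots> = ln (h powr (1 / \<beta>) / \<delta>) + \<beta> / (\<beta> - 1) * t\<^sup>2 * (\<sigma>\<^sup>2 / (2 * n))"
    using h E \<delta> by (subst ln_mult) (auto simp: E_def)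
  finally have ln_split: "ln (h powr (1 / \<beta>) * E / \<delta>)
      = ln (h powr (1 / \<beta>) / \<delta>) + \<beta> / (\<beta> - 1) * t\<^sup>2 * (\<sigma>\<^sup>2 / (2 * n))" .
  have "(\<lambda>(s, w). t * gen PZ n loss s w) \<in> borel_measurable (PS \<Otimes>\<^sub>M MW)"
    by measurable
  from PS.event_kernel_integral_le_ln[OF K this moment \<delta>(1) hE]
  obtain A where "A \<in> sets PS" "measure PS A \<ge> 1 - \<delta>"
      and "\<forall>s\<in>A. (\<integral>w. t * gen PZ n loss s w \<partial>K s) \<le> ln (h powr (1 / \<beta>) * E / \<delta>)"
    by blast
  then show ?thesis
    using ln_split unfolding h_def by auto
qed

lemma expected_gen_high_prob_bound:
  fixes K :: "(nat \<Rightarrow> 'z) \<Rightarrow> 'w measure" and PW :: "'w measure"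
  defines "PS \<equiv> sample_law PZ n"
  defines "PSW \<equiv> joint_law PS MW K"
  assumes K: "K \<in> PS \<rightarrow>\<^sub>M prob_algebra MW"
    and PW: "prob_space PW" and sets_PW: "sets PW = sets MW"
    and \<beta>: "\<beta> > 1"
    and ac: "absolutely_continuous (PS \<Otimes>\<^sub>M PW) PSW"
    and finite: "hellinger_integral \<beta> PSW (PS \<Otimes>\<^sub>M PW) < \<infinity>"
    and \<delta>: "0 < \<delta>" "\<delta> \<le> 1"
  shows "\<exists>A\<in>sets PS. measure PS A \<ge> 1 - \<delta> \<and>
    (\<forall>s\<in>A. (\<integral>w. gen PZ n loss s w \<partial>K s)
      \<le> sqrt (2 * \<sigma>\<^sup>2 / n) * (\<beta> / (\<beta> - 1) / 4
           + ln (enn2real (hellinger_integral \<beta> PSW (PS \<Otimes>\<^sub>M PW)) powr (1 / \<beta>) / \<delta>)))"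
proof -
  have scale: "\<sigma>\<^sup>2 / (2 * n) = (sqrt (2 * \<sigma>\<^sup>2 / n))\<^sup>2 / 4"
    using n_pos by simp
  show ?thesis
    unfolding PSW_def PS_def
    using expected_gen_bound_fixed_scale[OF K[unfolded PS_def] PW sets_PW \<beta>
        ac[unfolded PSW_def PS_def] finite[unfolded PSW_def PS_def] \<delta>, unfolded scale]
    by (intro prob_space.event_bound_of_quadratic_scaled_bounds[OF prob_space_sample_law])
      (auto simp: zero_le_divide_iff)
qed

end

theorem mainTheorem11:
  fixes PZ :: "'z measure" and MW :: "'w measure" and n :: nat
    and K :: "(nat \<Rightarrow> 'z) \<Rightarrow> 'w measure"
    and loss :: "'w \<Rightarrow> 'z \<Rightarrow> real" and \<sigma> \<beta> \<delta> :: real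
  defines "PS \<equiv> sample_law PZ n"
  defines "PSW \<equiv> joint_law PS MW K"
  defines "PW \<equiv> distr PSW MW snd"
  assumes PZ: "prob_space PZ"
    and n: "n \<ge> 1"
    and K: "K \<in> PS \<rightarrow>\<^sub>M prob_algebra MW"
    and loss_meas: "(\<lambda>(w, z). loss w z) \<in> borel_measurable (MW \<Otimes>\<^sub>M PZ)"
    and subgauss: "\<And>w t. w \<in> space MW \<Longrightarrow>
        (\<integral>\<^sup>+ z. ennreal (exp (t * (loss w z - (\<integral>z'. loss w z' \<partial>PZ)))) \<partial>PZ)
          \<le> ennreal (exp (t\<^sup>2 * \<sigma>\<^sup>2 / 2))"
    and \<beta>: "\<beta> > 1"
    and ac: "absolutely_continuous (PS \<Otimes>\<^sub>M PW) PSW"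
    and finite_H: "hellinger_integral \<beta> PSW (PS \<Otimes>\<^sub>M PW) < \<infinity>"
    and \<delta>: "0 < \<delta>" "\<delta> < 1"
  shows "\<exists>A \<in> sets PS. measure PS A \<ge> 1 - \<delta> \<and>
           (\<forall>s \<in> A. (\<integral>w. gen PZ n loss s w \<partial>(K s))
              \<le> sqrt (2 * \<sigma>\<^sup>2 / real n) *
                 (\<beta> / (4 * (\<beta> - 1)) +
                  ln ((((\<beta> - 1) * hellinger_div \<beta> PSW (PS \<Otimes>\<^sub>M PW) + 1) powr (1 / \<beta>)) / \<delta>)))"
proof -
  interpret subgaussian_loss PZ MW n loss \<sigma>
    by (rule subgaussian_loss.intro[OF PZ n loss_meas subgauss])
  have PS: "prob_space PS"
    unfolding PS_def by (rule prob_space_sample_law)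
  have PSW: "prob_space PSW" "sets PSW = sets (PS \<Otimes>\<^sub>M MW)"
    unfolding PSW_def by (rule prob_space_joint_law[OF PS K] sets_joint_law[OF PS K])+
  have PW: "prob_space PW" "sets PW = sets MW"
    unfolding PW_def using PSW measurable_cong_sets[OF PSW(2) refl]
    by (auto intro!: prob_space.prob_space_distr)
  have hellinger: "(\<beta> - 1) * hellinger_div \<beta> PSW (PS \<Otimes>\<^sub>M PW) + 1
      = enn2real (hellinger_integral \<beta> PSW (PS \<Otimes>\<^sub>M PW))"
    using \<beta> by (simp add: hellinger_div_def)
  have quarter: "\<beta> / (\<beta> - 1) / 4 = \<beta> / (4 * (\<beta> - 1))"
    by simp
  show ?thesis
    using expected_gen_high_prob_bound[OF K[unfolded PS_def] PW \<beta> ac[unfolded PSW_def PS_def]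
        finite_H[unfolded PSW_def PS_def] \<delta>(1) less_imp_le[OF \<delta>(2)]]
    unfolding PS_def[symmetric] PSW_def[symmetric] hellinger quarter .
qed

end
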